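(* For any positive integers $r$ and $\ell$ there exists an integer $\delta=\delta(r,\ell)$ such that the following holds. Let $G$ be a bipartite graph with bipartition $(X,Y)$ such that $X$ contains no pair of twins and $\eta_G(m)\le r\cdot m$ for every positive integer $m$. Then for every $Y'\subseteq Y$ with $|Y'|\ge\max\{2,|Y|/\ell\}$ there exist distinct vertices $u,v\in Y'$ which are $\delta$-near-twins in $G$.
   Context: $N(v)$ is the open neighborhood of $v$. The neighborhood complexity of $G$ is $\eta_G(m)=\max_A|\{N(v)\cap A: v\in V(G)\}|$ over all $m$-element subsets $A\subseteq V(G)$. Two vertices $u,v$ are twins if $N(u)=N(v)$, and are $\delta$-near-twins if $|N(u)\,\Delta\,N(v)|\le\delta$, where $\Delta$ is symmetric difference. *)

theory Defs
  imports Complex_Main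
begin

definition nbhd :: "('a \<Rightarrow> 'a \<Rightarrow> bool) \<Rightarrow> 'a \<Rightarrow> 'a set" where
  "nbhd E v = {u. E v u}"

definition bipartite_graph ::
  "'a set \<Rightarrow> ('a \<Rightarrow> 'a \<Rightarrow> bool) \<Rightarrow> 'a set \<Rightarrow> 'a set \<Rightarrow> bool" where
  "bipartite_graph V E X Y \<longleftrightarrow>
     finite V \<and>
     (\<forall>u v. E u v \<longrightarrow> u \<in> V \<and> v \<in> V \<and> u \<noteq> v \<and> E v u) \<and>
     X \<union> Y = V \<and> X \<inter> Y = {} \<and>
     (\<forall>u v. E u v \<longrightarrow> (u \<in> X \<and> v \<in> Y) \<or> (u \<in> Y \<and> v \<in> X))"

text \<open>Neighborhood complexity: maximum over m-element subsets A of V of the number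
of distinct traces N(v) \<inter> A, v \<in> V (taken to be 0 if there is no such A).\<close>

definition nbhd_complexity :: "'a set \<Rightarrow> ('a \<Rightarrow> 'a \<Rightarrow> bool) \<Rightarrow> nat \<Rightarrow> nat" where
  "nbhd_complexity V E m =
     Max ({card ((\<lambda>v. nbhd E v \<inter> A) ` V) | A. A \<subseteq> V \<and> card A = m} \<union> {0})"

definition twins :: "('a \<Rightarrow> 'a \<Rightarrow> bool) \<Rightarrow> 'a \<Rightarrow> 'a \<Rightarrow> bool" where
  "twins E u v \<longleftrightarrow> nbhd E u = nbhd E v"

definition near_twins :: "('a \<Rightarrow> 'a \<Rightarrow> bool) \<Rightarrow> nat \<Rightarrow> 'a \<Rightarrow> 'a \<Rightarrow> bool" where
  "near_twins E \<delta> u v \<longleftrightarrow>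
     card ((nbhd E u - nbhd E v) \<union> (nbhd E v - nbhd E u)) \<le> \<delta>"

end

theory Submission
  imports Defs
begin

(* If Y' has no delta-near-twins, the neighbourhoods N(y), y in Y', form a family of subsets of X
   whose pairwise symmetric differences exceed delta, and by the complexity bound this family has
   at most r |A| distinct traces on every nonempty A \<subseteq> X; in particular it shatters no set of
   more than 4 r points. Haussler's packing argument bounds such a family: on a random j-set I with
   j about |Y'| / 2r at least half of the family collides, so separation forces the points outside
   I to split the collision classes often, while Haussler's edge bound for one-inclusion graphs
   limits such splitting in terms of the VC-dimension. This gives (delta + 1) |Y'| < 32 r^2 |X|.
   Twin-freeness of X gives |X| \<le> r |Y| \<le> r l |Y'|, so delta = 32 r^3 l is impossible. *)

section \<open>One-inclusion graphs\<close>

definition shatters :: "'a set set \<Rightarrow> 'a set \<Rightarrow> bool" where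
  "shatters G B \<longleftrightarrow> (\<forall>C\<subseteq>B. \<exists>T\<in>G. T \<inter> B = C)"

text \<open>The edges of the one-inclusion graph of \<open>G\<close> in direction \<open>z\<close>, each represented
  by its endpoint not containing \<open>z\<close>.\<close>

definition unit_edges :: "'a set set \<Rightarrow> 'a \<Rightarrow> 'a set set" where
  "unit_edges G z = {T\<in>G. z \<notin> T \<and> insert z T \<in> G}"

definition unit_edge_count :: "'a set \<Rightarrow> 'a set set \<Rightarrow> nat" where
  "unit_edge_count A G = (\<Sum>z\<in>A. card (unit_edges G z))"

lemma shatters_mono: "G \<subseteq> H \<Longrightarrow> shatters G B \<Longrightarrow> shatters H B"
  unfolding shatters_def by (meson subsetD)

lemma shatters_image_Diff_singleton:
  assumes "x \<notin> B" and "shatters ((\<lambda>T. T - {x}) ` G) B"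
  shows "shatters G B"
  unfolding shatters_def
proof (intro allI impI)
  fix C assume "C \<subseteq> B"
  then obtain T where "T \<in> G" "(T - {x}) \<inter> B = C"
    using assms(2) unfolding shatters_def by blast
  moreover have "(T - {x}) \<inter> B = T \<inter> B" using assms(1) by blast
  ultimately show "\<exists>T\<in>G. T \<inter> B = C" by auto
qed

lemma shatters_insert_unit_edges:
  assumes "x \<notin> B" and "shatters (unit_edges G x) B"
  shows "shatters G (insert x B)"
  unfolding shatters_def
proof (intro allI impI)
  fix C assume C: "C \<subseteq> insert x B"
  then have "C - {x} \<subseteq> B" by blast
  then obtain U where "U \<in> unit_edges G x" "U \<inter> B = C - {x}"
    using assms(2) unfolding shatters_def by blast
  then have U: "U \<in> G" "x \<notin> U" "insert x U \<in> G" "U \<inter> B = C - {x}"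
    unfolding unit_edges_def by auto
  show "\<exists>T\<in>G. T \<inter> insert x B = C"
  proof (cases "x \<in> C")
    case True
    then have "insert x U \<inter> insert x B = C" using U C by auto
    then show ?thesis using U by blast
  next
    case False
    then have "U \<inter> insert x B = C" using U C by auto
    then show ?thesis using U by blast
  qed
qed

lemma card_split_unit_edges:
  assumes "finite G"
  shows "card G = card ((\<lambda>T. T - {x}) ` G) + card (unit_edges G x)"
proof -
  let ?f = "\<lambda>T. T - {x}"
  define G0 where "G0 = {T\<in>G. x \<notin> T}"
  define G1 where "G1 = {T\<in>G. x \<in> T}"
  have fin: "finite G0" "finite G1" using assms unfolding G0_def G1_def by auto
  have "G = G0 \<union> G1" "G0 \<inter> G1 = {}" unfolding G0_def G1_def by auto
  then have "card G = card G0 + card G1" "?f ` G = ?f ` G0 \<union> ?f ` G1"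
    using fin card_Un_disjoint by blast+
  moreover have "inj_on ?f G0" unfolding G0_def inj_on_def by auto
  moreover have "inj_on ?f G1"
    unfolding G1_def inj_on_def by (metis (mono_tags) insert_Diff mem_Collect_eq)
  moreover have "?f ` G0 \<inter> ?f ` G1 = unit_edges G x"
  proof (intro equalityI subsetI)
    fix U assume "U \<in> ?f ` G0 \<inter> ?f ` G1"
    then obtain T0 T1 where "T0 \<in> G0" "T1 \<in> G1" "U = T0 - {x}" "U = T1 - {x}" by blast
    moreover have "insert x U = T1" using \<open>T1 \<in> G1\<close> \<open>U = T1 - {x}\<close> unfolding G1_def by auto
    ultimately have "U \<in> G" "x \<notin> U" "insert x U \<in> G" unfolding G0_def G1_def by auto
    then show "U \<in> unit_edges G x" unfolding unit_edges_def by blast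
  next
    fix U assume "U \<in> unit_edges G x"
    then have "U \<in> G0" "insert x U \<in> G1" "U = ?f U" "U = ?f (insert x U)"
      unfolding unit_edges_def G0_def G1_def by auto
    then show "U \<in> ?f ` G0 \<inter> ?f ` G1" by blast
  qed
  ultimately show ?thesis
    using card_Un_Int[of "?f ` G0" "?f ` G1"] fin by (simp add: card_image)
qed

lemma unit_edges_commute: "unit_edges (unit_edges G x) z = unit_edges (unit_edges G z) x"
  unfolding unit_edges_def by (auto simp: insert_commute)

lemma card_unit_edges_le:
  assumes "finite G" and "z \<noteq> x"
  shows "card (unit_edges G z)
    \<le> card (unit_edges ((\<lambda>T. T - {x}) ` G) z) + card (unit_edges (unit_edges G x) z)"
proof -
  let ?f = "\<lambda>T. T - {x}"
  have fin: "finite (unit_edges H z)" if "finite H" for H :: "'a set set"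
    using that unfolding unit_edges_def by simp
  have "?f ` unit_edges G z \<subseteq> unit_edges (?f ` G) z"
  proof
    fix U assume "U \<in> ?f ` unit_edges G z"
    then obtain T where "T \<in> G" "z \<notin> T" "insert z T \<in> G" "U = T - {x}"
      unfolding unit_edges_def by blast
    moreover have "insert z (T - {x}) = insert z T - {x}" using assms(2) by blast
    ultimately show "U \<in> unit_edges (?f ` G) z" unfolding unit_edges_def by auto
  qed
  then have "card (?f ` unit_edges G z) \<le> card (unit_edges (?f ` G) z)"
    by (rule card_mono[OF fin[OF finite_imageI[OF assms(1)]]])
  moreover have "card (unit_edges G z) = card (?f ` unit_edges G z) + card (unit_edges (unit_edges G z) x)"
    by (rule card_split_unit_edges[OF fin[OF assms(1)]])
  ultimately show ?thesis using unit_edges_commute[of G z x] by simp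
qed

lemma unit_edges_eq_empty_if_vc_dim_0:
  assumes "z \<in> A" and "\<And>B. B \<subseteq> A \<Longrightarrow> shatters G B \<Longrightarrow> card B \<le> 0"
  shows "unit_edges G z = {}"
proof (rule ccontr)
  assume "unit_edges G z \<noteq> {}"
  then have "shatters (unit_edges G z) {}" unfolding shatters_def by blast
  then have "shatters G {z}" using shatters_insert_unit_edges[of z "{}" G] by simp
  then show False using assms(2)[of "{z}"] assms(1) by simp
qed

lemma unit_edge_count_insert_le:
  assumes "finite G" and "x \<notin> A" and "finite A"
  shows "unit_edge_count (insert x A) G
    \<le> card (unit_edges G x) + unit_edge_count A ((\<lambda>T. T - {x}) ` G) + unit_edge_count A (unit_edges G x)"
proof -
  have "unit_edge_count (insert x A) G = card (unit_edges G x) + (\<Sum>z\<in>A. card (unit_edges G z))"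
    unfolding unit_edge_count_def using assms(2,3) by simp
  also have "\<dots> \<le> card (unit_edges G x)
    + (\<Sum>z\<in>A. card (unit_edges ((\<lambda>T. T - {x}) ` G) z) + card (unit_edges (unit_edges G x) z))"
  proof (intro add_left_mono sum_mono)
    fix z assume "z \<in> A"
    then have "z \<noteq> x" using assms(2) by blast
    then show "card (unit_edges G z)
      \<le> card (unit_edges ((\<lambda>T. T - {x}) ` G) z) + card (unit_edges (unit_edges G x) z)"
      by (rule card_unit_edges_le[OF assms(1)])
  qed
  finally show ?thesis by (simp add: unit_edge_count_def sum.distrib)
qed

text \<open>Haussler's shifting argument: deleting the coordinate \<open>x\<close> splits \<open>G\<close> into its
  projection and its edges in direction \<open>x\<close>, and the latter family shatters only sets
  one smaller than those shattered by \<open>G\<close>.\<close>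

lemma unit_edge_count_le_vc_dim:
  assumes "finite A" and "G \<subseteq> Pow A" and "\<And>B. B \<subseteq> A \<Longrightarrow> shatters G B \<Longrightarrow> card B \<le> d"
  shows "unit_edge_count A G \<le> d * card G"
  using assms
proof (induction A arbitrary: G d rule: finite_induct)
  case empty
  then show ?case by (simp add: unit_edge_count_def)
next
  case (insert x A)
  let ?G' = "(\<lambda>T. T - {x}) ` G"
  let ?G'' = "unit_edges G x"
  have finG: "finite G" using finite_subset[OF insert.prems(1)] insert.hyps(1) by simp
  show ?case
  proof (cases d)
    case 0
    then show ?thesis
      using unit_edges_eq_empty_if_vc_dim_0[of _ "insert x A" G] insert.prems(2)
      by (simp add: unit_edge_count_def)
  next
    case (Suc d')
    have "unit_edge_count A ?G' \<le> d * card ?G'"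
    proof (rule insert.IH)
      show "?G' \<subseteq> Pow A" using insert.prems(1) by auto
      show "card B \<le> d" if B: "B \<subseteq> A" "shatters ?G' B" for B
      proof (rule insert.prems(2))
        have "x \<notin> B" using B(1) insert.hyps(2) by blast
        then show "shatters G B" by (rule shatters_image_Diff_singleton[OF _ B(2)])
      qed (use B(1) in blast)
    qed
    moreover have "unit_edge_count A ?G'' \<le> d' * card ?G''"
    proof (rule insert.IH)
      show "?G'' \<subseteq> Pow A" using insert.prems(1) unfolding unit_edges_def by auto
      show "card B \<le> d'" if B: "B \<subseteq> A" "shatters ?G'' B" for B
      proof -
        have "x \<notin> B" "finite B" using B insert.hyps finite_subset by auto
        moreover have "card (insert x B) \<le> d"
        proof (rule insert.prems(2))
          show "shatters G (insert x B)" by (rule shatters_insert_unit_edges[OF \<open>x \<notin> B\<close> B(2)])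
        qed (use B(1) in blast)
        ultimately show ?thesis using Suc by simp
      qed
    qed
    moreover have "card ?G'' + d * card ?G' + d' * card ?G'' = d * card G"
      using card_split_unit_edges[OF finG, of x] Suc by (simp add: algebra_simps)
    ultimately show ?thesis
      using unit_edge_count_insert_le[OF finG insert.hyps(2,1)] by linarith
  qed
qed

section \<open>Haussler's packing argument\<close>

definition trace_count :: "'b set \<Rightarrow> ('b \<Rightarrow> 'a set) \<Rightarrow> 'a set \<Rightarrow> 'a set \<Rightarrow> nat" where
  "trace_count P S A U = card {y\<in>P. S y \<inter> A = U}"

definition minority_count :: "'b set \<Rightarrow> ('b \<Rightarrow> 'a set) \<Rightarrow> 'a set \<Rightarrow> 'a \<Rightarrow> nat" where
  "minority_count P S I x =
     (\<Sum>T\<in>Pow I. min (card {y\<in>P. S y \<inter> I = T \<and> x \<in> S y}) (card {y\<in>P. S y \<inter> I = T \<and> x \<notin> S y}))"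

lemma card_filter_eq_sum: "finite A \<Longrightarrow> card {x\<in>A. Q x} = (\<Sum>x\<in>A. if Q x then 1 else 0)"
  by (simp add: sum.If_cases Collect_conj_eq Int_commute)

lemma min_eq_sum_levels:
  "(a::nat) \<le> k \<Longrightarrow> min a b = (\<Sum>t\<in>{1..k}. if t \<le> a \<and> t \<le> b then 1 else 0)"
proof -
  assume "a \<le> k"
  then have "{t\<in>{1..k}. t \<le> a \<and> t \<le> b} = {1..min a b}" by auto
  then show ?thesis using card_filter_eq_sum[of "{1..k}" "\<lambda>t. t \<le> a \<and> t \<le> b"] by simp
qed

lemma trace_count_le: "finite P \<Longrightarrow> trace_count P S A U \<le> card P"
  unfolding trace_count_def by (intro card_mono) auto

lemma sum_trace_count:
  assumes "finite P" and "finite A"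
  shows "(\<Sum>U\<in>Pow A. trace_count P S A U) = card P"
  using sum.group[of P "Pow A" "\<lambda>y. S y \<inter> A" "\<lambda>_. 1::nat"] assms
  unfolding trace_count_def by auto

text \<open>Layer-cake decomposition: \<open>min a b\<close> counts the levels \<open>t\<close> with \<open>t \<le> a\<close> and \<open>t \<le> b\<close>,
  and each level set of \<open>trace_count\<close> is a subfamily of the traces, so Haussler's edge
  bound applies level by level.\<close>

lemma unit_edge_count_level_set_le:
  assumes "finite A" and "t \<ge> 1"
    and vc: "\<And>B. B \<subseteq> A \<Longrightarrow> shatters ((\<lambda>y. S y \<inter> A) ` P) B \<Longrightarrow> card B \<le> d"
  shows "unit_edge_count A {U\<in>Pow A. t \<le> trace_count P S A U}
    \<le> d * card {U\<in>Pow A. t \<le> trace_count P S A U}"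
proof (rule unit_edge_count_le_vc_dim[OF assms(1)])
  have sub: "{U\<in>Pow A. t \<le> trace_count P S A U} \<subseteq> (\<lambda>y. S y \<inter> A) ` P"
  proof
    fix U assume "U \<in> {U\<in>Pow A. t \<le> trace_count P S A U}"
    then have "0 < card {y\<in>P. S y \<inter> A = U}" using assms(2) unfolding trace_count_def by auto
    then show "U \<in> (\<lambda>y. S y \<inter> A) ` P" by (auto simp: card_gt_0_iff)
  qed
  show "card B \<le> d" if "B \<subseteq> A" "shatters {U\<in>Pow A. t \<le> trace_count P S A U} B" for B
    using vc[OF that(1) shatters_mono[OF sub that(2)]] .
qed blast

lemma sum_min_trace_count_le_vc_dim:
  assumes finP: "finite P" and finA: "finite A"
    and vc: "\<And>B. B \<subseteq> A \<Longrightarrow> shatters ((\<lambda>y. S y \<inter> A) ` P) B \<Longrightarrow> card B \<le> d"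
  shows "(\<Sum>x\<in>A. \<Sum>T\<in>Pow (A - {x}). min (trace_count P S A (insert x T)) (trace_count P S A T))
    \<le> d * card P"
proof -
  let ?k = "card P"
  let ?w = "trace_count P S A"
  define G where "G t = {U\<in>Pow A. t \<le> ?w U}" for t
  have "(\<Sum>x\<in>A. \<Sum>T\<in>Pow (A - {x}). min (?w (insert x T)) (?w T)) =
        (\<Sum>x\<in>A. \<Sum>T\<in>Pow (A - {x}). \<Sum>t\<in>{1..?k}. if t \<le> ?w (insert x T) \<and> t \<le> ?w T then 1 else 0)"
    by (intro sum.cong refl min_eq_sum_levels trace_count_le[OF finP])
  also have "\<dots> = (\<Sum>t\<in>{1..?k}. \<Sum>x\<in>A. \<Sum>T\<in>Pow (A - {x}). if t \<le> ?w (insert x T) \<and> t \<le> ?w T then 1 else 0)"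
    by (subst sum.swap) (intro sum.cong refl sum.swap)
  also have "\<dots> = (\<Sum>t\<in>{1..?k}. unit_edge_count A (G t))"
    unfolding unit_edge_count_def
  proof (intro sum.cong refl)
    fix t x assume "x \<in> A"
    then have "unit_edges (G t) x = {T\<in>Pow (A - {x}). t \<le> ?w (insert x T) \<and> t \<le> ?w T}"
      unfolding unit_edges_def G_def by auto
    moreover have "finite (Pow (A - {x}))" using finA by simp
    ultimately show "(\<Sum>T\<in>Pow (A - {x}). if t \<le> ?w (insert x T) \<and> t \<le> ?w T then 1 else 0)
      = card (unit_edges (G t) x)"
      using card_filter_eq_sum by metis
  qed
  also have "\<dots> \<le> (\<Sum>t\<in>{1..?k}. d * card (G t))"
    unfolding G_def using unit_edge_count_level_set_le[where P = P and S = S, OF finA _ vc] by (intro sum_mono) simp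
  also have "\<dots> = d * (\<Sum>t\<in>{1..?k}. \<Sum>U\<in>Pow A. if t \<le> ?w U then 1 else 0)"
  proof -
    have "card (G t) = (\<Sum>U\<in>Pow A. if t \<le> ?w U then 1 else 0)" for t
      unfolding G_def by (rule card_filter_eq_sum) (simp add: finA)
    then show ?thesis by (simp add: sum_distrib_left)
  qed
  also have "\<dots> = d * (\<Sum>U\<in>Pow A. \<Sum>t\<in>{1..?k}. if t \<le> ?w U then 1 else 0)"
    by (subst sum.swap) (rule refl)
  also have "\<dots> = d * (\<Sum>U\<in>Pow A. ?w U)"
  proof (intro arg_cong[where f="(*) d"] sum.cong refl)
    fix U
    have "?w U \<le> ?k" by (rule trace_count_le[OF finP])
    from min_eq_sum_levels[OF this, of "?w U"]
    show "(\<Sum>t\<in>{1..?k}. if t \<le> ?w U then 1 else 0) = ?w U" by simp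
  qed
  also have "\<dots> = d * ?k" using sum_trace_count[OF finP finA] by simp
  finally show ?thesis .
qed

lemma minority_count_Diff_singleton:
  assumes "x \<in> A"
  shows "minority_count P S (A - {x}) x
    = (\<Sum>T\<in>Pow (A - {x}). min (trace_count P S A (insert x T)) (trace_count P S A T))"
  unfolding minority_count_def trace_count_def
proof (intro sum.cong refl)
  fix T assume "T \<in> Pow (A - {x})"
  then have "{y\<in>P. S y \<inter> (A - {x}) = T \<and> x \<in> S y} = {y\<in>P. S y \<inter> A = insert x T}"
    "{y\<in>P. S y \<inter> (A - {x}) = T \<and> x \<notin> S y} = {y\<in>P. S y \<inter> A = T}"
    using assms by auto
  then show "min (card {y\<in>P. S y \<inter> (A - {x}) = T \<and> x \<in> S y}) (card {y\<in>P. S y \<inter> (A - {x}) = T \<and> x \<notin> S y})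
    = min (card {y\<in>P. S y \<inter> A = insert x T}) (card {y\<in>P. S y \<inter> A = T})"
    by simp
qed

lemma sum_minority_count_le_vc_dim:
  assumes "finite P" and "finite A"
    and "\<And>B. B \<subseteq> A \<Longrightarrow> shatters ((\<lambda>y. S y \<inter> A) ` P) B \<Longrightarrow> card B \<le> d"
  shows "(\<Sum>x\<in>A. minority_count P S (A - {x}) x) \<le> d * card P"
  using sum_min_trace_count_le_vc_dim[OF assms] by (simp add: minority_count_Diff_singleton)

lemma mult_le_add_mult_min: "(a::nat) * b \<le> (a + b) * min a b"
  by (cases "a \<le> b") (auto simp: algebra_simps min_def)

lemma sum_card_mem_mult_card_not_mem:
  assumes "finite X" and "finite C" and sub: "\<And>y. y \<in> C \<Longrightarrow> S y \<subseteq> X"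
  shows "(\<Sum>x\<in>X. card {y\<in>C. x \<in> S y} * card {y\<in>C. x \<notin> S y}) = (\<Sum>y\<in>C. \<Sum>y'\<in>C. card (S y - S y'))"
proof -
  have "card {y\<in>C. x \<in> S y} * card {y\<in>C. x \<notin> S y}
    = (\<Sum>y\<in>C. \<Sum>y'\<in>C. if x \<in> S y \<and> x \<notin> S y' then 1 else 0)" for x
  proof -
    have "card {y\<in>C. x \<in> S y} * card {y\<in>C. x \<notin> S y}
      = (\<Sum>y\<in>C. if x \<in> S y then 1 else 0) * (\<Sum>y'\<in>C. if x \<notin> S y' then 1 else 0)"
      using \<open>finite C\<close> by (simp only: card_filter_eq_sum)
    also have "\<dots> = (\<Sum>y\<in>C. \<Sum>y'\<in>C. (if x \<in> S y then 1 else 0) * (if x \<notin> S y' then 1 else 0))"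
      by (rule sum_product)
    also have "\<dots> = (\<Sum>y\<in>C. \<Sum>y'\<in>C. if x \<in> S y \<and> x \<notin> S y' then 1 else 0)"
      by (intro sum.cong refl) auto
    finally show ?thesis .
  qed
  then have "(\<Sum>x\<in>X. card {y\<in>C. x \<in> S y} * card {y\<in>C. x \<notin> S y})
    = (\<Sum>x\<in>X. \<Sum>y\<in>C. \<Sum>y'\<in>C. if x \<in> S y \<and> x \<notin> S y' then 1 else 0)"
    by simp
  also have "\<dots> = (\<Sum>y\<in>C. \<Sum>y'\<in>C. \<Sum>x\<in>X. if x \<in> S y \<and> x \<notin> S y' then 1 else 0)"
    by (subst sum.swap) (intro sum.cong refl sum.swap)
  also have "\<dots> = (\<Sum>y\<in>C. \<Sum>y'\<in>C. card (S y - S y'))"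
  proof (intro sum.cong refl)
    fix y y' assume "y \<in> C"
    then have "{x\<in>X. x \<in> S y \<and> x \<notin> S y'} = S y - S y'" using sub by blast
    then show "(\<Sum>x\<in>X. if x \<in> S y \<and> x \<notin> S y' then 1 else 0) = card (S y - S y')"
      using \<open>finite X\<close> card_filter_eq_sum by metis
  qed
  finally show ?thesis .
qed

lemma separated_family_sum_card_Diff_ge:
  assumes finX: "finite X" and finC: "finite C" and sub: "\<And>y. y \<in> C \<Longrightarrow> S y \<subseteq> X"
    and sep: "\<And>y y'. y \<in> C \<Longrightarrow> y' \<in> C \<Longrightarrow> y \<noteq> y' \<Longrightarrow> \<delta> < card (sym_diff (S y) (S y'))"
    and "y \<in> C"
  shows "(\<delta> + 1) * (card C - 1) \<le> (\<Sum>y'\<in>C. card (S y - S y') + card (S y' - S y))"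
proof -
  have "(\<delta> + 1) * (card C - 1) = (\<Sum>y'\<in>C - {y}. \<delta> + 1)" using finC \<open>y \<in> C\<close> by simp
  also have "\<dots> \<le> (\<Sum>y'\<in>C - {y}. card (S y - S y') + card (S y' - S y))"
  proof (intro sum_mono)
    fix y' assume y': "y' \<in> C - {y}"
    then have "finite (S y)" "finite (S y')"
      using \<open>y \<in> C\<close> sub finX finite_subset by blast+
    then have "card (sym_diff (S y) (S y')) = card (S y - S y') + card (S y' - S y)"
      by (intro card_Un_disjoint) auto
    moreover have "\<delta> < card (sym_diff (S y) (S y'))" using sep y' \<open>y \<in> C\<close> by auto
    ultimately show "\<delta> + 1 \<le> card (S y - S y') + card (S y' - S y)" by simp
  qed
  also have "\<dots> \<le> (\<Sum>y'\<in>C. card (S y - S y') + card (S y' - S y))"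
    using finC by (intro sum_mono2) auto
  finally show ?thesis .
qed

text \<open>Each of the \<open>|C| (|C| - 1)\<close> ordered pairs is separated by more than \<open>\<delta>\<close> points, and a
  point separating \<open>a\<close> members from \<open>b\<close> others accounts for \<open>2 a b \<le> 2 |C| min a b\<close> of them.\<close>

lemma separated_family_sum_min_bound:
  assumes finX: "finite X" and finC: "finite C" and sub: "\<And>y. y \<in> C \<Longrightarrow> S y \<subseteq> X"
    and sep: "\<And>y y'. y \<in> C \<Longrightarrow> y' \<in> C \<Longrightarrow> y \<noteq> y' \<Longrightarrow> \<delta> < card (sym_diff (S y) (S y'))"
  shows "(\<delta> + 1) * (card C - 1) \<le> 2 * (\<Sum>x\<in>X. min (card {y\<in>C. x \<in> S y}) (card {y\<in>C. x \<notin> S y}))"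
proof -
  let ?s = "card C"
  let ?a = "\<lambda>x. card {y\<in>C. x \<in> S y}"
  let ?b = "\<lambda>x. card {y\<in>C. x \<notin> S y}"
  have ab: "?a x + ?b x = ?s" for x
  proof -
    have "C = {y\<in>C. x \<in> S y} \<union> {y\<in>C. x \<notin> S y}" by blast
    then have "?s = card ({y\<in>C. x \<in> S y} \<union> {y\<in>C. x \<notin> S y})" by simp
    also have "\<dots> = ?a x + ?b x" using finC by (intro card_Un_disjoint) auto
    finally show ?thesis by simp
  qed
  have "?s * ((\<delta> + 1) * (?s - 1)) \<le> (\<Sum>y\<in>C. \<Sum>y'\<in>C. card (S y - S y') + card (S y' - S y))"
    using sum_mono[OF separated_family_sum_card_Diff_ge[OF finX finC sub sep]] by simp
  also have "\<dots> = 2 * (\<Sum>x\<in>X. ?a x * ?b x)"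
  proof -
    have "(\<Sum>y\<in>C. \<Sum>y'\<in>C. card (S y' - S y)) = (\<Sum>y\<in>C. \<Sum>y'\<in>C. card (S y - S y'))"
      by (rule sum.swap)
    then show ?thesis
      by (simp only: sum.distrib sum_card_mem_mult_card_not_mem[OF finX finC sub] mult_2)
  qed
  also have "\<dots> \<le> 2 * (\<Sum>x\<in>X. ?s * min (?a x) (?b x))"
  proof (intro mult_left_mono sum_mono)
    fix x
    show "?a x * ?b x \<le> ?s * min (?a x) (?b x)"
      using mult_le_add_mult_min[of "?a x" "?b x"] ab[of x] by simp
  qed simp
  also have "\<dots> = ?s * (2 * (\<Sum>x\<in>X. min (?a x) (?b x)))"
    by (simp add: sum_distrib_left mult.left_commute)
  finally show ?thesis by (cases "?s = 0") auto
qed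

lemma card_Diff_card_traces_le:
  assumes "finite P" and "finite I"
  shows "card P - card ((\<lambda>y. S y \<inter> I) ` P) \<le> (\<Sum>T\<in>Pow I. trace_count P S I T - 1)"
proof -
  have "(\<lambda>y. S y \<inter> I) ` P = {T\<in>Pow I. trace_count P S I T \<noteq> 0}"
    unfolding trace_count_def using assms(1) by auto
  moreover have "finite (Pow I)" using assms(2) by simp
  ultimately have "card ((\<lambda>y. S y \<inter> I) ` P) = (\<Sum>T\<in>Pow I. if trace_count P S I T \<noteq> 0 then 1 else 0)"
    using card_filter_eq_sum by metis
  moreover have "(\<Sum>T\<in>Pow I. trace_count P S I T)
    \<le> (\<Sum>T\<in>Pow I. trace_count P S I T - 1) + (\<Sum>T\<in>Pow I. if trace_count P S I T \<noteq> 0 then 1 else 0)"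
    unfolding sum.distrib[symmetric] by (intro sum_mono) auto
  ultimately show ?thesis using sum_trace_count[OF assms, of S] by linarith
qed

lemma sum_minority_count_ge:
  assumes finX: "finite X" and finP: "finite P" and sub: "\<And>y. y \<in> P \<Longrightarrow> S y \<subseteq> X"
    and sep: "\<And>y y'. y \<in> P \<Longrightarrow> y' \<in> P \<Longrightarrow> y \<noteq> y' \<Longrightarrow> \<delta> < card (sym_diff (S y) (S y'))"
    and IX: "I \<subseteq> X"
  shows "(\<delta> + 1) * (card P - card ((\<lambda>y. S y \<inter> I) ` P)) \<le> 2 * (\<Sum>x\<in>X - I. minority_count P S I x)"
proof -
  define C where "C T = {y\<in>P. S y \<inter> I = T}" for T
  define m where "m T x = min (card {y\<in>C T. x \<in> S y}) (card {y\<in>C T. x \<notin> S y})" for T x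
  have finI: "finite I" using IX finX finite_subset by blast
  have finC: "finite (C T)" for T unfolding C_def using finP by simp
  have class_bound: "(\<delta> + 1) * (card (C T) - 1) \<le> 2 * (\<Sum>x\<in>X - I. m T x)" for T
  proof -
    have "m T x = 0" if "x \<in> I" for x
    proof -
      have "{y\<in>C T. x \<in> S y} = {} \<or> {y\<in>C T. x \<notin> S y} = {}"
        using that unfolding C_def by blast
      then show ?thesis unfolding m_def by (metis card.empty min_0L min_0R)
    qed
    then have "(\<Sum>x\<in>X. m T x) = (\<Sum>x\<in>X - I. m T x)"
      using finX by (intro sum.mono_neutral_right) auto
    moreover have "(\<delta> + 1) * (card (C T) - 1) \<le> 2 * (\<Sum>x\<in>X. m T x)"
      unfolding m_def using finX finC sub sep unfolding C_def
      by (intro separated_family_sum_min_bound) auto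
    ultimately show ?thesis by simp
  qed
  have "card P - card ((\<lambda>y. S y \<inter> I) ` P) \<le> (\<Sum>T\<in>Pow I. card (C T) - 1)"
    using card_Diff_card_traces_le[OF finP finI, of S] unfolding trace_count_def C_def .
  then have "(\<delta> + 1) * (card P - card ((\<lambda>y. S y \<inter> I) ` P)) \<le> (\<delta> + 1) * (\<Sum>T\<in>Pow I. card (C T) - 1)"
    by (rule mult_left_mono) simp
  also have "\<dots> = (\<Sum>T\<in>Pow I. (\<delta> + 1) * (card (C T) - 1))"
    by (rule sum_distrib_left)
  also have "\<dots> \<le> (\<Sum>T\<in>Pow I. 2 * (\<Sum>x\<in>X - I. m T x))"
    using class_bound by (rule sum_mono)
  also have "\<dots> = 2 * (\<Sum>T\<in>Pow I. \<Sum>x\<in>X - I. m T x)"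
    by (simp add: sum_distrib_left)
  also have "\<dots> = 2 * (\<Sum>x\<in>X - I. \<Sum>T\<in>Pow I. m T x)"
    by (subst sum.swap) (rule refl)
  also have "\<dots> = 2 * (\<Sum>x\<in>X - I. minority_count P S I x)"
  proof -
    have "{y\<in>C T. x \<in> S y} = {y\<in>P. S y \<inter> I = T \<and> x \<in> S y}"
      "{y\<in>C T. x \<notin> S y} = {y\<in>P. S y \<inter> I = T \<and> x \<notin> S y}" for T x
      unfolding C_def by auto
    then show ?thesis unfolding minority_count_def m_def by simp
  qed
  finally show ?thesis .
qed

lemma sum_minority_count_ge_of_few_traces:
  assumes "finite X" and "finite P" and "\<And>y. y \<in> P \<Longrightarrow> S y \<subseteq> X"
    and "\<And>y y'. y \<in> P \<Longrightarrow> y' \<in> P \<Longrightarrow> y \<noteq> y' \<Longrightarrow> \<delta> < card (sym_diff (S y) (S y'))"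
    and "I \<subseteq> X" and few: "2 * card ((\<lambda>y. S y \<inter> I) ` P) \<le> card P"
  shows "(\<delta> + 1) * card P \<le> 4 * (\<Sum>x\<in>X - I. minority_count P S I x)"
proof -
  from few have "card P \<le> 2 * (card P - card ((\<lambda>y. S y \<inter> I) ` P))" by simp
  then have "(\<delta> + 1) * card P \<le> (\<delta> + 1) * (2 * (card P - card ((\<lambda>y. S y \<inter> I) ` P)))"
    by (rule mult_left_mono) simp
  also have "\<dots> = 2 * ((\<delta> + 1) * (card P - card ((\<lambda>y. S y \<inter> I) ` P)))" by simp
  also have "\<dots> \<le> 4 * (\<Sum>x\<in>X - I. minority_count P S I x)"
    using sum_minority_count_ge[where S = S and \<delta> = \<delta>, OF assms(1-5)] by simp
  finally show ?thesis .
qed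

lemma sum_subsets_Suc_card:
  assumes finX: "finite X"
  shows "(\<Sum>A\<in>{A. A \<subseteq> X \<and> card A = Suc j}. \<Sum>x\<in>A. f (A - {x}) x) =
         (\<Sum>I\<in>{I. I \<subseteq> X \<and> card I = j}. \<Sum>x\<in>X - I. f I x)"
proof -
  let ?AA = "{A. A \<subseteq> X \<and> card A = Suc j}"
  let ?II = "{I. I \<subseteq> X \<and> card I = j}"
  have fin: "finite ?AA" "finite ?II" "\<And>A. A \<subseteq> X \<Longrightarrow> finite A"
    using finX finite_subset by (auto intro: finite_subset[of _ "Pow X"])
  have "(\<Sum>A\<in>?AA. \<Sum>x\<in>A. f (A - {x}) x) = (\<Sum>(A, x)\<in>Sigma ?AA (\<lambda>A. A). f (A - {x}) x)"
    using fin by (intro sum.Sigma) auto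
  also have "\<dots> = (\<Sum>(I, x)\<in>Sigma ?II (\<lambda>I. X - I). f I x)"
    by (rule sum.reindex_bij_witness[where i = "\<lambda>(I, x). (insert x I, x)" and j = "\<lambda>(A, x). (A - {x}, x)"])
      (auto simp: fin card_insert_if)
  also have "\<dots> = (\<Sum>I\<in>?II. \<Sum>x\<in>X - I. f I x)"
    using fin finX by (intro sum.Sigma[symmetric]) auto
  finally show ?thesis .
qed

lemma card_subsets_Suc_mult:
  assumes "finite X"
  shows "card {A. A \<subseteq> X \<and> card A = Suc j} * Suc j = card {I. I \<subseteq> X \<and> card I = j} * (card X - j)"
proof -
  have "Suc j * (card X choose Suc j) = (card X - j) * (card X choose j)"
    by (simp only: binomial_absorption binomial_absorb_comp)
  then show ?thesis unfolding n_subsets[OF assms] by (metis mult.commute)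
qed

lemma square_le_two_power: "4 \<le> b \<Longrightarrow> b * b \<le> (2::nat) ^ b"
proof (induction b rule: dec_induct)
  case (step n)
  have "4 * n \<le> n * n" using step(1) by (rule mult_le_mono1)
  have "Suc n * Suc n = n * n + (2 * n + 1)" by simp
  also have "\<dots> \<le> n * n + n * n" using \<open>4 * n \<le> n * n\<close> step(1) by linarith
  also have "\<dots> \<le> 2 ^ Suc n" using step(3) by simp
  finally show ?case .
qed simp

lemma mult_less_two_power: "4 * r < (b::nat) \<Longrightarrow> r * b < 2 ^ b"
proof (cases "r = 0")
  case False
  assume "4 * r < b"
  then have "r * b < b * b" and "4 \<le> b" using False by auto
  then show ?thesis using square_le_two_power by (meson less_le_trans)
qed simp

lemma shattered_card_le_of_linear_traces:
  assumes traces: "\<And>A. A \<subseteq> X \<Longrightarrow> A \<noteq> {} \<Longrightarrow> card ((\<lambda>y. S y \<inter> A) ` P) \<le> r * card A"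
    and finX: "finite X" and "A \<subseteq> X" and "B \<subseteq> A" and sh: "shatters ((\<lambda>y. S y \<inter> A) ` P) B"
  shows "card B \<le> 4 * r"
proof (rule ccontr)
  assume "\<not> card B \<le> 4 * r"
  then have big: "4 * r < card B" by simp
  have BX: "B \<subseteq> X" using assms by blast
  then have finB: "finite B" using finX finite_subset by blast
  have "Pow B \<subseteq> (\<lambda>y. S y \<inter> B) ` P"
  proof
    fix C assume "C \<in> Pow B"
    then have "\<exists>y\<in>P. S y \<inter> A \<inter> B = C" using sh unfolding shatters_def by simp
    then obtain y where "y \<in> P" "S y \<inter> A \<inter> B = C" by blast
    moreover have "S y \<inter> A \<inter> B = S y \<inter> B" using \<open>B \<subseteq> A\<close> by blast
    ultimately show "C \<in> (\<lambda>y. S y \<inter> B) ` P" by (metis rev_image_eqI)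
  qed
  moreover have "finite ((\<lambda>y. S y \<inter> B) ` P)"
  proof (rule finite_subset)
    show "(\<lambda>y. S y \<inter> B) ` P \<subseteq> Pow B" by blast
  qed (simp add: finB)
  ultimately have "card (Pow B) \<le> card ((\<lambda>y. S y \<inter> B) ` P)" by (intro card_mono)
  then have "2 ^ card B \<le> card ((\<lambda>y. S y \<inter> B) ` P)" by (simp only: card_Pow[OF finB])
  also have "\<dots> \<le> r * card B" using big by (intro traces[OF BX]) auto
  finally show False using mult_less_two_power[OF big] by simp
qed

lemma sum_minority_count_le_of_linear_traces:
  assumes traces: "\<And>A. A \<subseteq> X \<Longrightarrow> A \<noteq> {} \<Longrightarrow> card ((\<lambda>y. S y \<inter> A) ` P) \<le> r * card A"
    and finX: "finite X" and "finite P" and AX: "A \<subseteq> X"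
  shows "(\<Sum>x\<in>A. minority_count P S (A - {x}) x) \<le> 4 * r * card P"
proof (rule sum_minority_count_le_vc_dim[OF \<open>finite P\<close>])
  show "finite A" using finX AX finite_subset by blast
  show "card B \<le> 4 * r" if "B \<subseteq> A" "shatters ((\<lambda>y. S y \<inter> A) ` P) B" for B
    using shattered_card_le_of_linear_traces[where S = S and P = P, OF traces finX AX that] .
qed

text \<open>Averaging: the lower bound over all \<open>j\<close>-sets \<open>I\<close> and the upper bound over all
  \<open>(j + 1)\<close>-sets \<open>I \<union> {x}\<close> sum the same terms.\<close>

lemma separated_family_averaged_bound:
  assumes finX: "finite X" and finP: "finite P" and sub: "\<And>y. y \<in> P \<Longrightarrow> S y \<subseteq> X"
    and sep: "\<And>y y'. y \<in> P \<Longrightarrow> y' \<in> P \<Longrightarrow> y \<noteq> y' \<Longrightarrow> \<delta> < card (sym_diff (S y) (S y'))"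
    and traces: "\<And>A. A \<subseteq> X \<Longrightarrow> A \<noteq> {} \<Longrightarrow> card ((\<lambda>y. S y \<inter> A) ` P) \<le> r * card A"
    and P2: "card P \<ge> 2" and jP: "2 * r * j \<le> card P" and jX: "j \<le> card X"
  shows "(\<delta> + 1) * Suc j \<le> 16 * r * card X"
proof -
  define k where "k = card P"
  define n where "n = card X"
  define AA where "AA = {A. A \<subseteq> X \<and> card A = Suc j}"
  define II where "II = {I. I \<subseteq> X \<and> card I = j}"
  have up: "(\<Sum>x\<in>A. minority_count P S (A - {x}) x) \<le> 4 * r * k" if "A \<in> AA" for A
  proof -
    have AX: "A \<subseteq> X" using that unfolding AA_def by simp
    show ?thesis unfolding k_def
      by (rule sum_minority_count_le_of_linear_traces[of X S P r A, OF _ finX finP AX]) (fact traces)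
  qed
  have lo: "(\<delta> + 1) * k \<le> 4 * (\<Sum>x\<in>X - I. minority_count P S I x)" if "I \<in> II" for I
  proof -
    have IX: "I \<subseteq> X" and cI: "card I = j" using that unfolding II_def by auto
    have few: "2 * card ((\<lambda>y. S y \<inter> I) ` P) \<le> card P"
    proof (cases "I = {}")
      case True
      then have "card ((\<lambda>y. S y \<inter> I) ` P) \<le> 1" using finP by (simp add: card_le_Suc0_iff_eq)
      then show ?thesis using P2 by simp
    next
      case False
      then have "card ((\<lambda>y. S y \<inter> I) ` P) \<le> r * j" using traces IX cI by auto
      then show ?thesis using jP by simp
    qed
    show ?thesis
      using sum_minority_count_ge_of_few_traces[OF finX finP sub sep IX few] unfolding k_def by simp
  qed
  have "card II * ((\<delta> + 1) * k) \<le> 4 * (\<Sum>I\<in>II. \<Sum>x\<in>X - I. minority_count P S I x)"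
    using sum_mono[OF lo] by (simp add: sum_distrib_left)
  also have "\<dots> = 4 * (\<Sum>A\<in>AA. \<Sum>x\<in>A. minority_count P S (A - {x}) x)"
    unfolding AA_def II_def using sum_subsets_Suc_card[OF finX, where f = "minority_count P S" and j = j] by simp
  also have "\<dots> \<le> 4 * (card AA * (4 * r * k))"
    using sum_bounded_above[of AA "\<lambda>A. \<Sum>x\<in>A. minority_count P S (A - {x}) x" "4 * r * k"] up
    by (simp add: mult_ac)
  finally have "card II * ((\<delta> + 1) * k) * Suc j \<le> 4 * (card AA * (4 * r * k)) * Suc j"
    by (rule mult_right_mono) simp
  also have "\<dots> = 16 * r * k * (card AA * Suc j)" by (simp add: algebra_simps)
  also have "\<dots> = 16 * r * k * (card II * (n - j))"
    unfolding AA_def II_def n_def using card_subsets_Suc_mult[OF finX, of j] by simp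
  also have "\<dots> \<le> 16 * r * k * (card II * n)" by (intro mult_left_mono) simp_all
  finally have "(card II * k) * ((\<delta> + 1) * Suc j) \<le> (card II * k) * (16 * r * n)"
    by (simp add: algebra_simps)
  then have "0 < card II * k \<longrightarrow> (\<delta> + 1) * Suc j \<le> 16 * r * n" by (simp only: mult_le_cancel1)
  moreover have "card II > 0"
    unfolding II_def using finX jX by (simp add: n_subsets)
  moreover have "k > 0" using P2 unfolding k_def by simp
  ultimately show ?thesis unfolding n_def by simp
qed

theorem separated_family_card_bound:
  assumes finX: "finite X" and finP: "finite P" and sub: "\<And>y. y \<in> P \<Longrightarrow> S y \<subseteq> X"
    and sep: "\<And>y y'. y \<in> P \<Longrightarrow> y' \<in> P \<Longrightarrow> y \<noteq> y' \<Longrightarrow> \<delta> < card (sym_diff (S y) (S y'))"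
    and traces: "\<And>A. A \<subseteq> X \<Longrightarrow> A \<noteq> {} \<Longrightarrow> card ((\<lambda>y. S y \<inter> A) ` P) \<le> r * card A"
    and "r > 0" and P2: "card P \<ge> 2"
  shows "(\<delta> + 1) * card P < 32 * r * r * card X"
proof -
  define j where "j = card P div (2 * r)"
  \<comment> \<open>so that a \<open>j\<close>-set carries at most \<open>r j \<le> card P / 2\<close> traces\<close>
  obtain y y' where "y \<in> P" "y' \<in> P" "y \<noteq> y'"
    using P2 finP card_le_Suc0_iff_eq[of P] by auto
  then have "X \<noteq> {}" using sep[of y y'] sub by fastforce
  have "inj_on (\<lambda>y. S y \<inter> X) P"
  proof (rule inj_onI)
    fix y y' assume "y \<in> P" "y' \<in> P" "S y \<inter> X = S y' \<inter> X"
    moreover from this have "S y = S y'" using sub by (simp add: Int_absorb2)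
    ultimately show "y = y'" using sep[of y y'] by fastforce
  qed
  then have PX: "card P \<le> r * card X" using traces[of X] \<open>X \<noteq> {}\<close> by (simp add: card_image)
  have jP: "2 * r * j \<le> card P"
    unfolding j_def by (metis div_times_less_eq_dividend mult.commute)
  have "r * (2 * j) \<le> r * card X" using le_trans[OF jP PX] by (simp add: mult_ac)
  then have jX: "j \<le> card X" using \<open>r > 0\<close> by simp
  have "card P = 2 * r * j + card P mod (2 * r)" unfolding j_def by simp
  moreover have "card P mod (2 * r) < 2 * r" using \<open>r > 0\<close> by simp
  ultimately have "card P < 2 * r * Suc j" by simp
  have avg: "(\<delta> + 1) * Suc j \<le> 16 * r * card X"
    by (rule separated_family_averaged_bound[OF finX finP sub sep traces P2 jP jX])
  from \<open>card P < 2 * r * Suc j\<close> have "(\<delta> + 1) * card P < (\<delta> + 1) * (2 * r * Suc j)"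
    by (rule mult_strict_left_mono) simp
  also have "\<dots> = 2 * r * ((\<delta> + 1) * Suc j)" by (simp add: algebra_simps)
  also have "\<dots> \<le> 2 * r * (16 * r * card X)"
    by (rule mult_left_mono[OF avg]) simp
  finally show ?thesis by (simp add: algebra_simps)
qed

section \<open>Bipartite graphs of linear neighbourhood complexity\<close>

lemma card_traces_le_nbhd_complexity:
  assumes "finite V" and "A \<subseteq> V"
  shows "card ((\<lambda>v. nbhd E v \<inter> A) ` V) \<le> nbhd_complexity V E (card A)"
proof -
  have "{card ((\<lambda>v. nbhd E v \<inter> B) ` V) | B. B \<subseteq> V \<and> card B = card A}
    \<subseteq> (\<lambda>B. card ((\<lambda>v. nbhd E v \<inter> B) ` V)) ` Pow V"
    by blast
  then have "finite ({card ((\<lambda>v. nbhd E v \<inter> B) ` V) | B. B \<subseteq> V \<and> card B = card A} \<union> {0})"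
    using assms(1) finite_subset by blast
  then show ?thesis
    unfolding nbhd_complexity_def using assms(2) by (intro Max_ge) blast+
qed

lemma bipartite_graph_swap: "bipartite_graph V E X Y \<Longrightarrow> bipartite_graph V E Y X"
  unfolding bipartite_graph_def by blast

lemma bipartite_graph_finite_subsets:
  assumes "bipartite_graph V E X Y"
  shows "finite V" "X \<subseteq> V" "Y \<subseteq> V"
proof -
  have "finite V" "X \<union> Y = V" using assms unfolding bipartite_graph_def by simp_all
  then show "finite V" "X \<subseteq> V" "Y \<subseteq> V" by auto
qed

lemma bipartite_graph_nbhd_subset: "bipartite_graph V E X Y \<Longrightarrow> v \<in> Y \<Longrightarrow> nbhd E v \<subseteq> X"
  unfolding bipartite_graph_def nbhd_def by blast

lemma bipartite_graph_card_traces_le: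
  assumes "bipartite_graph V E X Y" and "W \<subseteq> V" and "A \<subseteq> V"
    and "nbhd_complexity V E (card A) \<le> r * card A"
  shows "card ((\<lambda>v. nbhd E v \<inter> A) ` W) \<le> r * card A"
proof -
  have "finite V" by (rule bipartite_graph_finite_subsets[OF assms(1)])
  then have "card ((\<lambda>v. nbhd E v \<inter> A) ` W) \<le> card ((\<lambda>v. nbhd E v \<inter> A) ` V)"
    using assms(2) by (intro card_mono image_mono) auto
  also have "\<dots> \<le> nbhd_complexity V E (card A)"
    by (rule card_traces_le_nbhd_complexity[OF \<open>finite V\<close> assms(3)])
  finally show ?thesis using assms(4) by linarith
qed

text \<open>A twin-free side is determined by its traces on the other side.\<close>

lemma card_twin_free_side_le:
  assumes bip: "bipartite_graph V E X Y"
    and twin_free: "\<And>x x'. x \<in> X \<Longrightarrow> x' \<in> X \<Longrightarrow> twins E x x' \<Longrightarrow> x = x'"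
    and "nbhd_complexity V E (card Y) \<le> r * card Y"
  shows "card X \<le> r * card Y"
proof -
  have XY: "X \<subseteq> V" "Y \<subseteq> V" using bipartite_graph_finite_subsets[OF bip] by simp_all
  have "inj_on (\<lambda>x. nbhd E x \<inter> Y) X"
  proof (rule inj_onI)
    fix x x' assume "x \<in> X" "x' \<in> X" "nbhd E x \<inter> Y = nbhd E x' \<inter> Y"
    moreover have "nbhd E x \<subseteq> Y" "nbhd E x' \<subseteq> Y"
      using \<open>x \<in> X\<close> \<open>x' \<in> X\<close> bipartite_graph_nbhd_subset[OF bipartite_graph_swap[OF bip]] by blast+
    ultimately show "x = x'" using twin_free unfolding twins_def by (metis inf.absorb1)
  qed
  then have "card X = card ((\<lambda>x. nbhd E x \<inter> Y) ` X)" by (simp add: card_image)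
  also have "\<dots> \<le> r * card Y"
    using bipartite_graph_card_traces_le[OF bip XY(1) XY(2)] assms(3) by blast
  finally show ?thesis .
qed

lemma le_mult_of_real_divide_le:
  fixes n l k :: nat
  assumes "l > 0" and "real n / real l \<le> real k"
  shows "n \<le> l * k"
proof -
  have "real n \<le> real k * real l" using assms by (simp add: divide_le_eq)
  then show ?thesis by (simp flip: of_nat_mult add: mult.commute)
qed

lemma bipartite_near_twins_exist:
  assumes bip: "bipartite_graph V E X Y" and "r > 0"
    and complexity: "\<And>m. m > 0 \<Longrightarrow> nbhd_complexity V E m \<le> r * m"
    and "Y' \<subseteq> Y" and "card Y' \<ge> 2" and large: "32 * r * r * card X \<le> (\<delta> + 1) * card Y'"
  shows "\<exists>u\<in>Y'. \<exists>v\<in>Y'. u \<noteq> v \<and> near_twins E \<delta> u v"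
proof (rule ccontr)
  assume no_near_twins: "\<not> ?thesis"
  note V = bipartite_graph_finite_subsets[OF bip]
  have "(\<delta> + 1) * card Y' < 32 * r * r * card X"
  proof (rule separated_family_card_bound)
    show finX: "finite X" by (rule rev_finite_subset[OF V(1,2)])
    show "finite Y'" using \<open>Y' \<subseteq> Y\<close> V(3) by (intro rev_finite_subset[OF V(1)]) (rule order.trans)
    show "nbhd E y \<subseteq> X" if "y \<in> Y'" for y
      using that \<open>Y' \<subseteq> Y\<close> bipartite_graph_nbhd_subset[OF bip] by blast
    show "\<delta> < card (sym_diff (nbhd E y) (nbhd E y'))" if "y \<in> Y'" "y' \<in> Y'" "y \<noteq> y'" for y y'
      using no_near_twins that unfolding near_twins_def by (meson not_le)
    show "card ((\<lambda>y. nbhd E y \<inter> A) ` Y') \<le> r * card A" if "A \<subseteq> X" "A \<noteq> {}" for A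
    proof (rule bipartite_graph_card_traces_le[OF bip])
      show "Y' \<subseteq> V" "A \<subseteq> V" using that V \<open>Y' \<subseteq> Y\<close> by blast+
      have "card A > 0" using that rev_finite_subset[OF finX that(1)] by (simp add: card_gt_0_iff)
      then show "nbhd_complexity V E (card A) \<le> r * card A" by (rule complexity)
    qed
  qed (use assms in auto)
  with large show False by simp
qed

theorem lemma3p1:
  fixes r l :: nat
  assumes "r > 0" and "l > 0"
  shows "\<exists>\<delta>::nat. \<forall>(V::'a set) E X Y.
     bipartite_graph V E X Y \<longrightarrow>
     (\<forall>x\<in>X. \<forall>x'\<in>X. x \<noteq> x' \<longrightarrow> \<not> twins E x x') \<longrightarrow>
     (\<forall>m::nat. m > 0 \<longrightarrow> nbhd_complexity V E m \<le> r * m) \<longrightarrow>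
     (\<forall>Y'. Y' \<subseteq> Y \<and> card Y' \<ge> 2 \<and> real (card Y') \<ge> real (card Y) / real l \<longrightarrow>
        (\<exists>u\<in>Y'. \<exists>v\<in>Y'. u \<noteq> v \<and> near_twins E \<delta> u v))"
proof (intro exI[of _ "32 * r * r * r * l"] allI impI)
  fix V :: "'a set" and E X Y Y'
  assume bip: "bipartite_graph V E X Y"
    and twin_free: "\<forall>x\<in>X. \<forall>x'\<in>X. x \<noteq> x' \<longrightarrow> \<not> twins E x x'"
    and complexity: "\<forall>m::nat. m > 0 \<longrightarrow> nbhd_complexity V E m \<le> r * m"
    and Y': "Y' \<subseteq> Y \<and> card Y' \<ge> 2 \<and> real (card Y') \<ge> real (card Y) / real l"
  have "finite Y" using bipartite_graph_finite_subsets[OF bip] by (metis rev_finite_subset)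
  then have "card Y \<ge> 2" using Y' card_mono[of Y Y'] by linarith
  then have "card X \<le> r * card Y"
    using twin_free complexity by (intro card_twin_free_side_le[OF bip]) auto
  moreover have "card Y \<le> l * card Y'" using Y' \<open>l > 0\<close> by (intro le_mult_of_real_divide_le) auto
  ultimately have "card X \<le> r * (l * card Y')" by (meson le_trans mult_le_mono2)
  then have "32 * r * r * card X \<le> (32 * r * r * r * l + 1) * card Y'"
    by (rule order.trans[OF mult_le_mono2]) (simp add: algebra_simps)
  then show "\<exists>u\<in>Y'. \<exists>v\<in>Y'. u \<noteq> v \<and> near_twins E (32 * r * r * r * l) u v"
    using Y' complexity by (intro bipartite_near_twins_exist[OF bip \<open>r > 0\<close>]) auto
qed

end
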